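(* The big-O problem (for labelled Markov chains) reduces to the Value-1 problem; in particular, if the Value-1 problem were decidable, the big-O problem for labelled Markov chains would be decidable.
   Context: A (non-negative) weighted automaton is $\langle Q,\Sigma,M,F\rangle$ with finite $Q$, $M:\Sigma\to\mathbb{Q}_{\ge0}^{Q\times Q}$, $F\subseteq Q$; $\nu_s(a_1\cdots a_n)=\sum_{t\in F}(M(a_1)\cdots M(a_n))_{s,t}$. State $s$ is big-O of $s'$ if there is $C>0$ with $\nu_s(w)\le C\nu_{s'}(w)$ for all $w$; the big-O problem asks this for a given automaton and states $s,s'$. A labelled Markov chain is a weighted automaton with $\sum_{q'}\sum_aM(a)(q,q')=1$ for non-final $q$ and no positive-weight transitions out of final states. A probabilistic automaton is a weighted automaton with a start state $q_s$ such that $\sum_{q'}M(a)(q,q')=1$ for all $q,a$; $\Pr_{\mathcal{A}}(w)=\nu_{q_s}(w)$. The Value-1 problem: given a probabilistic automaton $\mathcal{A}$, decide whether for every $\delta>0$ there is $w$ with $\Pr_{\mathcal{A}}(w)>1-\delta$. *)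

theory Defs
  imports Complex_Main "HOL-Library.Nat_Bijection"
begin

datatype recf = Zf | Sf | Idf nat | Cnf recf "recf list" | Prf recf recf | Mnf recf

inductive rec_eval :: "recf \<Rightarrow> nat list \<Rightarrow> nat \<Rightarrow> bool" where
  ev_Z:  "rec_eval Zf xs 0"
| ev_S:  "rec_eval Sf [x] (Suc x)"
| ev_Id: "i < length xs \<Longrightarrow> rec_eval (Idf i) xs (xs ! i)"
| ev_Cn: "length ys = length gs \<Longrightarrow> (\<forall>i<length gs. rec_eval (gs ! i) xs (ys ! i))
          \<Longrightarrow> rec_eval f ys z \<Longrightarrow> rec_eval (Cnf f gs) xs z"
| ev_Pr0: "rec_eval f xs z \<Longrightarrow> rec_eval (Prf f g) (0 # xs) z"
| ev_PrS: "rec_eval (Prf f g) (x # xs) y \<Longrightarrow> rec_eval g (x # y # xs) z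
          \<Longrightarrow> rec_eval (Prf f g) (Suc x # xs) z"
| ev_Mn: "rec_eval f (z # xs) 0 \<Longrightarrow> (\<forall>y<z. \<exists>v. v > 0 \<and> rec_eval f (y # xs) v)
          \<Longrightarrow> rec_eval (Mnf f) xs z"

definition computable :: "(nat \<Rightarrow> nat) \<Rightarrow> bool" where
  "computable f \<longleftrightarrow> (\<exists>p. \<forall>x. rec_eval p [x] (f x))"

text \<open>A weighted automaton (n, Ms, F): states Q = {0..<n}, alphabet {0..<length Ms},
  M(a)(q,q') = Ms!a!q!q', final states F (a list of states).\<close>
type_synonym wa = "nat \<times> rat list list list \<times> nat list"

definition states :: "wa \<Rightarrow> nat" where "states A = fst A"
definition nletters :: "wa \<Rightarrow> nat" where "nletters A = length (fst (snd A))"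
definition wt :: "wa \<Rightarrow> nat \<Rightarrow> nat \<Rightarrow> nat \<Rightarrow> rat" where
  "wt A a q q' = fst (snd A) ! a ! q ! q'"
definition finals :: "wa \<Rightarrow> nat set" where "finals A = set (snd (snd A))"

definition well_formed :: "wa \<Rightarrow> bool" where
  "well_formed A \<longleftrightarrow>
     (\<forall>m \<in> set (fst (snd A)). length m = states A \<and> (\<forall>r \<in> set m. length r = states A \<and> (\<forall>x \<in> set r. x \<ge> 0)))
   \<and> finals A \<subseteq> {0..<states A}"

definition words :: "wa \<Rightarrow> nat list set" where
  "words A = {w. \<forall>a \<in> set w. a < nletters A}"

text \<open>nu A s w = sum over t in F of (M(a1)...M(an))(s,t).\<close>
fun nu :: "wa \<Rightarrow> nat \<Rightarrow> nat list \<Rightarrow> rat" where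
  "nu A s [] = (if s \<in> finals A then 1 else 0)"
| "nu A s (a # w) = (\<Sum>t<states A. wt A a s t * nu A t w)"

definition big_O :: "wa \<Rightarrow> nat \<Rightarrow> nat \<Rightarrow> bool" where
  "big_O A s s' \<longleftrightarrow> (\<exists>C::real. C > 0 \<and> (\<forall>w \<in> words A. real_of_rat (nu A s w) \<le> C * real_of_rat (nu A s' w)))"

definition is_LMC :: "wa \<Rightarrow> bool" where
  "is_LMC A \<longleftrightarrow> well_formed A
     \<and> (\<forall>q<states A. q \<notin> finals A \<longrightarrow> (\<Sum>q'<states A. \<Sum>a<nletters A. wt A a q q') = 1)
     \<and> (\<forall>q<states A. q \<in> finals A \<longrightarrow> (\<forall>q'<states A. \<forall>a<nletters A. wt A a q q' = 0))"

definition is_PA :: "wa \<Rightarrow> nat \<Rightarrow> bool" where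
  "is_PA A qs \<longleftrightarrow> well_formed A \<and> qs < states A
     \<and> (\<forall>q<states A. \<forall>a<nletters A. (\<Sum>q'<states A. wt A a q q') = 1)"

definition value1 :: "wa \<Rightarrow> nat \<Rightarrow> bool" where
  "value1 A qs \<longleftrightarrow> (\<forall>\<delta>::real. \<delta> > 0 \<longrightarrow> (\<exists>w \<in> words A. real_of_rat (nu A qs w) > 1 - \<delta>))"

definition enc_rat :: "rat \<Rightarrow> nat" where
  "enc_rat r = prod_encode (int_encode (fst (quotient_of r)), nat (snd (quotient_of r)))"

definition enc_wa :: "wa \<Rightarrow> nat" where
  "enc_wa A = prod_encode (fst A, prod_encode
     (list_encode (map (\<lambda>m. list_encode (map (\<lambda>r. list_encode (map enc_rat r)) m)) (fst (snd A))),
      list_encode (snd (snd A))))"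

definition enc_bigO_inst :: "wa \<Rightarrow> nat \<Rightarrow> nat \<Rightarrow> nat" where
  "enc_bigO_inst A s s' = prod_encode (enc_wa A, prod_encode (s, s'))"

definition enc_PA :: "wa \<Rightarrow> nat \<Rightarrow> nat" where
  "enc_PA A qs = prod_encode (enc_wa A, qs)"

end

(*
  From an LMC with states s and s' we build a probabilistic automaton over the LMC's letters
  plus an end marker $ and a start marker #. Reading #, it moves with probability 1/2 to a copy
  of s and with probability 1/2 to a copy of s', and the copies simulate the LMC on a word w.
  At $ the copy of s accepts from a final state, the copy of s' rejects from a final state, and
  everything else restarts. So the round # w $ accepts with probability x/2, rejects with
  probability y/2 and restarts otherwise, where x = nu_s(w) and y = nu_s'(w), and repeating it
  accepts with probability close to x / (x + y). If nu_s <= C nu_s' on all words, induction on the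
  rounds bounds every acceptance probability by C / (1 + C) < 1. Otherwise some word makes
  x / (x + y) as close to 1 as we like. Hence s is big-O of s' iff the automaton does not have
  value 1. The automaton is built from the code of the instance by a primitive recursive
  function.
*)

theory Submission
  imports Defs "HOL-Library.More_List"
begin

section \<open>Total recursive functions of fixed arity\<close>

definition rec_computable :: "nat \<Rightarrow> (nat list \<Rightarrow> nat) \<Rightarrow> bool" where
  "rec_computable k f \<longleftrightarrow> (\<exists>p. \<forall>xs. length xs = k \<longrightarrow> rec_eval p xs (f xs))"

lemma rec_computable_cong:
  assumes "rec_computable k f" and "\<And>xs. length xs = k \<Longrightarrow> f xs = g xs"
  shows "rec_computable k g"
proof -
  obtain p where "\<forall>xs. length xs = k \<longrightarrow> rec_eval p xs (f xs)"
    using assms(1) unfolding rec_computable_def by blast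
  then show ?thesis
    unfolding rec_computable_def using assms(2) by auto
qed

lemma computable_if_rec_computable:
  assumes "rec_computable 1 (\<lambda>xs. f (hd xs))"
  shows "computable f"
proof -
  obtain p where "\<forall>xs. length xs = 1 \<longrightarrow> rec_eval p xs (f (hd xs))"
    using assms unfolding rec_computable_def by blast
  then have "rec_eval p [x] (f x)" for x
    by (metis One_nat_def length_Cons list.sel(1) list.size(3))
  then show ?thesis
    unfolding computable_def by blast
qed

lemma rec_computable_zero: "rec_computable k (\<lambda>_. 0)"
  unfolding rec_computable_def by (auto intro: ev_Z)

lemma rec_computable_nth: "i < k \<Longrightarrow> rec_computable k (\<lambda>xs. xs ! i)"
  unfolding rec_computable_def by (auto intro: ev_Id)

lemma rec_computable_compose:
  assumes f: "rec_computable m f" and hs: "\<And>i. i < m \<Longrightarrow> rec_computable k (hs i)"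
  shows "rec_computable k (\<lambda>xs. f (map (\<lambda>i. hs i xs) [0..<m]))"
proof -
  obtain pf where pf: "\<forall>ys. length ys = m \<longrightarrow> rec_eval pf ys (f ys)"
    using f unfolding rec_computable_def by blast
  have "\<forall>i. \<exists>p. i < m \<longrightarrow> (\<forall>xs. length xs = k \<longrightarrow> rec_eval p xs (hs i xs))"
    using hs unfolding rec_computable_def by blast
  then obtain ps where ps: "\<And>i xs. i < m \<Longrightarrow> length xs = k \<Longrightarrow> rec_eval (ps i) xs (hs i xs)"
    by metis
  have "rec_eval (Cnf pf (map ps [0..<m])) xs (f (map (\<lambda>i. hs i xs) [0..<m]))"
    if "length xs = k" for xs
    by (rule ev_Cn[where ys = "map (\<lambda>i. hs i xs) [0..<m]"]) (use pf ps that in auto)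
  then show ?thesis
    unfolding rec_computable_def by blast
qed

lemma rec_computable_composeI:
  assumes "rec_computable m f" and "\<And>i. i < m \<Longrightarrow> rec_computable k (hs i)"
    and "\<And>xs. length xs = k \<Longrightarrow> g xs = f (map (\<lambda>i. hs i xs) [0..<m])"
  shows "rec_computable k g"
  by (rule rec_computable_cong[OF rec_computable_compose]) (use assms in auto)

lemma rec_computable_Suc:
  assumes "rec_computable k a"
  shows "rec_computable k (\<lambda>xs. Suc (a xs))"
proof -
  have "rec_computable 1 (\<lambda>xs. Suc (hd xs))"
    unfolding rec_computable_def by (rule exI[of _ Sf]) (auto simp: length_Suc_conv intro: ev_S)
  then show ?thesis
    by (rule rec_computable_composeI[where hs = "\<lambda>_. a"]) (auto intro: assms)
qed

lemma rec_computable_const: "rec_computable k (\<lambda>_. c)"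
  by (induction c) (auto intro: rec_computable_zero rec_computable_Suc)

lemma rec_computable_drop:
  assumes "rec_computable k f"
  shows "rec_computable (j + k) (\<lambda>ys. f (drop j ys))"
proof (rule rec_computable_composeI[OF assms, where hs = "\<lambda>i ys. ys ! (j + i)"])
  fix ys :: "nat list"
  assume "length ys = j + k"
  then have "drop j ys = map (\<lambda>i. ys ! (j + i)) [0..<k]"
    by (simp add: list_eq_iff_nth_eq)
  then show "f (drop j ys) = f (map (\<lambda>i. ys ! (j + i)) [0..<k])"
    by simp
qed (auto intro: rec_computable_nth)

lemma rec_computable_Cons_drop:
  assumes g: "rec_computable (Suc k) g" and h: "rec_computable (j + k) h"
  shows "rec_computable (j + k) (\<lambda>ys. g (h ys # drop j ys))"
proof (rule rec_computable_composeI[OF g, where hs = "\<lambda>i. if i = 0 then h else (\<lambda>ys. ys ! (j + i - 1))"])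
  fix ys :: "nat list"
  assume "length ys = j + k"
  then have "map (\<lambda>i. ys ! (j + Suc i - 1)) [0..<k] = drop j ys"
    by (auto simp: list_eq_iff_nth_eq)
  then show "g (h ys # drop j ys) = g (map (\<lambda>i. (if i = 0 then h else (\<lambda>ys. ys ! (j + i - 1))) ys) [0..<Suc k])"
    by (simp only: map_upt_Suc) simp
qed (use h in \<open>auto intro: rec_computable_nth\<close>)

lemma rec_computable_rec_nat:
  assumes b: "rec_computable k b" and s: "rec_computable (Suc (Suc k)) s"
    and n: "rec_computable k n"
  shows "rec_computable k (\<lambda>xs. rec_nat (b xs) (\<lambda>i acc. s (i # acc # xs)) (n xs))"
proof -
  obtain pb where pb: "\<forall>xs. length xs = k \<longrightarrow> rec_eval pb xs (b xs)"
    using b unfolding rec_computable_def by blast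
  obtain ps where ps: "\<forall>ys. length ys = Suc (Suc k) \<longrightarrow> rec_eval ps ys (s ys)"
    using s unfolding rec_computable_def by blast
  have eval: "rec_eval (Prf pb ps) (x # xs) (rec_nat (b xs) (\<lambda>i acc. s (i # acc # xs)) x)"
    if "length xs = k" for x xs
    by (induction x) (use pb ps that in \<open>auto intro: ev_Pr0 ev_PrS\<close>)
  have "rec_computable (Suc k) (\<lambda>ys. rec_nat (b (tl ys)) (\<lambda>i acc. s (i # acc # tl ys)) (hd ys))"
    unfolding rec_computable_def
  proof (intro exI allI impI)
    fix ys :: "nat list"
    assume "length ys = Suc k"
    then show "rec_eval (Prf pb ps) ys (rec_nat (b (tl ys)) (\<lambda>i acc. s (i # acc # tl ys)) (hd ys))"
      using eval by (cases ys) auto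
  qed
  from rec_computable_Cons_drop[OF this, of 0 n] n show ?thesis
    by simp
qed

lemma rec_computable_add:
  assumes "rec_computable k a" and "rec_computable k b"
  shows "rec_computable k (\<lambda>xs. a xs + b xs)"
proof -
  have "rec_nat y (\<lambda>i acc. Suc acc) x = x + y" for x y :: nat
    by (induction x) auto
  then show ?thesis
    using rec_computable_rec_nat[OF assms(2) rec_computable_Suc[OF rec_computable_nth] assms(1), of 1]
    by simp
qed

lemma rec_computable_diff:
  assumes "rec_computable k a" and "rec_computable k b"
  shows "rec_computable k (\<lambda>xs. a xs - b xs)"
proof -
  have "rec_nat 0 (\<lambda>i acc. i) x = x - 1" for x :: nat
    by (induction x) auto
  then have pred: "rec_computable (Suc (Suc k)) (\<lambda>ys. ys ! 1 - 1)"
    using rec_computable_rec_nat[OF rec_computable_zero rec_computable_nth rec_computable_nth, of 0 "Suc (Suc k)" 1]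
    by simp
  have "rec_nat y (\<lambda>i acc. acc - 1) x = y - x" for x y :: nat
    by (induction x) auto
  then show ?thesis
    using rec_computable_rec_nat[OF assms(1) pred assms(2)] by simp
qed

lemma rec_computable_mult:
  assumes "rec_computable k a" and "rec_computable k b"
  shows "rec_computable k (\<lambda>xs. a xs * b xs)"
proof -
  have "rec_nat 0 (\<lambda>i acc. acc + y) x = x * y" for x y :: nat
    by (induction x) auto
  moreover have "rec_computable (Suc (Suc k)) (\<lambda>ys. ys ! 1 + b (drop 2 ys))"
    using rec_computable_add[OF rec_computable_nth rec_computable_drop[OF assms(2), of 2]] by simp
  note rec_computable_rec_nat[OF rec_computable_zero this assms(1)]
  ultimately show ?thesis
    by simp
qed

lemma rec_computable_sum:
  assumes g: "rec_computable (Suc k) g" and n: "rec_computable k n"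
  shows "rec_computable k (\<lambda>xs. \<Sum>i<n xs. g (i # xs))"
proof -
  have "rec_nat 0 (\<lambda>i acc. acc + f i) x = (\<Sum>i<x. f i)" for x and f :: "nat \<Rightarrow> nat"
    by (induction x) auto
  moreover have "rec_computable (Suc (Suc k)) (\<lambda>ys. ys ! 1 + g (ys ! 0 # drop 2 ys))"
    using rec_computable_add[OF rec_computable_nth rec_computable_Cons_drop[OF g, of 2]]
      rec_computable_nth[of 0 "Suc (Suc k)"]
    by simp
  note rec_computable_rec_nat[OF rec_computable_zero this n]
  ultimately show ?thesis
    by simp
qed

definition rec_decidable :: "nat \<Rightarrow> (nat list \<Rightarrow> bool) \<Rightarrow> bool" where
  "rec_decidable k P \<longleftrightarrow> rec_computable k (\<lambda>xs. of_bool (P xs))"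

lemma rec_decidable_le:
  assumes "rec_computable k a" and "rec_computable k b"
  shows "rec_decidable k (\<lambda>xs. a xs \<le> b xs)"
  unfolding rec_decidable_def
  by (rule rec_computable_cong[OF rec_computable_diff[OF rec_computable_const rec_computable_diff[OF assms]], of 1])
     auto

lemma rec_decidable_less:
  assumes "rec_computable k a" and "rec_computable k b"
  shows "rec_decidable k (\<lambda>xs. a xs < b xs)"
  using rec_decidable_le[OF rec_computable_Suc[OF assms(1)] assms(2)] by (simp add: Suc_le_eq)

lemma rec_decidable_eq:
  assumes "rec_computable k a" and "rec_computable k b"
  shows "rec_decidable k (\<lambda>xs. a xs = b xs)"
  unfolding rec_decidable_def
  by (rule rec_computable_cong[OF rec_computable_diff[OF rec_computable_const
        rec_computable_add[OF rec_computable_diff[OF assms] rec_computable_diff[OF assms(2,1)]]], of 1])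
     auto

lemma rec_decidable_not:
  assumes "rec_decidable k P"
  shows "rec_decidable k (\<lambda>xs. \<not> P xs)"
  using assms unfolding rec_decidable_def
  by (rule rec_computable_cong[OF rec_computable_diff[OF rec_computable_const], of _ _ 1]) auto

lemma rec_decidable_conj:
  assumes "rec_decidable k P" and "rec_decidable k Q"
  shows "rec_decidable k (\<lambda>xs. P xs \<and> Q xs)"
  using rec_computable_mult[OF assms[unfolded rec_decidable_def]] unfolding rec_decidable_def
  by (simp add: of_bool_conj)

lemma rec_decidable_disj:
  assumes "rec_decidable k P" and "rec_decidable k Q"
  shows "rec_decidable k (\<lambda>xs. P xs \<or> Q xs)"
  using rec_decidable_not[OF rec_decidable_conj[OF rec_decidable_not[OF assms(1)] rec_decidable_not[OF assms(2)]]]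
  by simp

lemma rec_computable_If:
  assumes P: "rec_decidable k P" and "rec_computable k a" and "rec_computable k b"
  shows "rec_computable k (\<lambda>xs. if P xs then a xs else b xs)"
proof -
  have "rec_computable k (\<lambda>xs. of_bool (P xs) * a xs + of_bool (\<not> P xs) * b xs)"
    using P rec_decidable_not[OF P] assms(2,3) unfolding rec_decidable_def
    by (intro rec_computable_add rec_computable_mult)
  then show ?thesis
    by (rule rec_computable_cong) simp
qed

lemma rec_decidable_bex_less:
  assumes P: "rec_decidable (Suc k) P" and n: "rec_computable k n"
  shows "rec_decidable k (\<lambda>xs. \<exists>i<n xs. P (i # xs))"
proof -
  have "(\<exists>i<m. Q i) \<longleftrightarrow> 0 < (\<Sum>i<m. of_bool (Q i) :: nat)" for m :: nat and Q
    by (induction m) (auto simp: less_Suc_eq)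
  then show ?thesis
    using rec_decidable_less[OF rec_computable_zero rec_computable_sum[OF P[unfolded rec_decidable_def] n]]
    by simp
qed

lemma sum_of_bool_less: "(\<Sum>i<z. of_bool (i < m) :: nat) = min z m"
  by (induction z) auto

lemma rec_computable_div:
  assumes a: "rec_computable k a" and b: "rec_computable k b"
  shows "rec_computable k (\<lambda>xs. a xs div b xs)"
proof -
  have count: "x div y = (\<Sum>i<x. of_bool (Suc i * y \<le> x))" if "0 < y" for x y :: nat
  proof -
    have "Suc i * y \<le> x \<longleftrightarrow> i < x div y" for i
      using less_eq_div_iff_mult_less_eq[OF that, of "Suc i" x] by (simp add: Suc_le_eq)
    then have "(\<Sum>i<x. of_bool (i < x div y) :: nat) = (\<Sum>i<x. of_bool (Suc i * y \<le> x))"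
      by (intro sum.cong) simp_all
    with sum_of_bool_less[where z = x and m = "x div y"] div_le_dividend[of x y] show ?thesis
      by (simp only: min_absorb2)
  qed
  have "rec_decidable (Suc k) (\<lambda>ys. Suc (ys ! 0) * b (drop 1 ys) \<le> a (drop 1 ys))"
    using rec_computable_drop[OF a, of 1] rec_computable_drop[OF b, of 1]
    by (intro rec_decidable_le rec_computable_mult rec_computable_Suc rec_computable_nth) auto
  from rec_computable_sum[OF this[unfolded rec_decidable_def] a]
  have "rec_computable k (\<lambda>xs. \<Sum>i<a xs. of_bool (Suc i * b xs \<le> a xs))"
    by simp
  then have "rec_computable k (\<lambda>xs. if b xs = 0 then 0 else \<Sum>i<a xs. of_bool (Suc i * b xs \<le> a xs))"
    by (intro rec_computable_If rec_decidable_eq b rec_computable_zero)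
  then show ?thesis
    by (rule rec_computable_cong) (simp add: count)
qed

lemma rec_computable_mod:
  assumes "rec_computable k a" and "rec_computable k b"
  shows "rec_computable k (\<lambda>xs. a xs mod b xs)"
  using rec_computable_diff[OF assms(1) rec_computable_mult[OF assms(2) rec_computable_div[OF assms]]]
  by (simp add: minus_div_mult_eq_mod[symmetric] mult.commute)

lemma rec_computable_triangle:
  assumes "rec_computable k a"
  shows "rec_computable k (\<lambda>xs. triangle (a xs))"
proof -
  have "triangle x = rec_nat 0 (\<lambda>i acc. acc + Suc i) x" for x
    by (induction x) auto
  moreover have "rec_computable (Suc (Suc k)) (\<lambda>ys. ys ! 1 + Suc (ys ! 0))"
    by (intro rec_computable_add rec_computable_Suc rec_computable_nth) auto
  note rec_computable_rec_nat[OF rec_computable_zero this assms]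
  ultimately show ?thesis
    by simp
qed

lemma rec_computable_prod_encode:
  assumes "rec_computable k a" and "rec_computable k b"
  shows "rec_computable k (\<lambda>xs. prod_encode (a xs, b xs))"
  unfolding prod_encode_def
  using assms by (simp add: rec_computable_add rec_computable_triangle)

lemma prod_decode_diagonal:
  "fst (prod_decode z) + snd (prod_decode z) = (\<Sum>i<z. of_bool (triangle (Suc i) \<le> z))"
proof -
  obtain x y where xy: "prod_decode z = (x, y)"
    by fastforce
  have z: "z = triangle (x + y) + x"
    using prod_decode_inverse[of z] by (simp add: xy prod_encode_def)
  have mono: "i \<le> j \<Longrightarrow> triangle i \<le> triangle j" for i j
    by (rule lift_Suc_mono_le[of triangle]) auto
  have iff: "triangle (Suc i) \<le> z \<longleftrightarrow> i < x + y" for i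
  proof
    assume "triangle (Suc i) \<le> z"
    then show "i < x + y"
      using mono[of "Suc (x + y)" "Suc i"] z by (cases "i < x + y") auto
  qed (use mono[of "Suc i" "x + y"] z in auto)
  then have "(\<Sum>i<z. of_bool (i < x + y) :: nat) = (\<Sum>i<z. of_bool (triangle (Suc i) \<le> z))"
    by (intro sum.cong) simp_all
  moreover have "x + y \<le> z"
    using mono[of 1 "x + y"] z by (cases "x + y") auto
  ultimately show ?thesis
    using sum_of_bool_less[where z = z and m = "x + y"] xy by (simp only: min_absorb2 fst_conv snd_conv)
qed

lemma
  assumes a: "rec_computable k a"
  shows rec_computable_fst_prod_decode: "rec_computable k (\<lambda>xs. fst (prod_decode (a xs)))"
    and rec_computable_snd_prod_decode: "rec_computable k (\<lambda>xs. snd (prod_decode (a xs)))"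
proof -
  have "rec_decidable (Suc k) (\<lambda>ys. triangle (Suc (ys ! 0)) \<le> a (drop 1 ys))"
    using rec_computable_drop[OF a, of 1]
    by (intro rec_decidable_le rec_computable_triangle rec_computable_Suc rec_computable_nth) auto
  from rec_computable_sum[OF this[unfolded rec_decidable_def] a]
  have diag: "rec_computable k (\<lambda>xs. fst (prod_decode (a xs)) + snd (prod_decode (a xs)))"
    by (simp add: prod_decode_diagonal)
  have "fst (prod_decode z) = z - triangle (fst (prod_decode z) + snd (prod_decode z))" for z
    using prod_decode_inverse[of z] unfolding prod_encode_def by (simp add: case_prod_beta)
  then show fst: "rec_computable k (\<lambda>xs. fst (prod_decode (a xs)))"
    using rec_computable_diff[OF a rec_computable_triangle[OF diag]] by simp
  show "rec_computable k (\<lambda>xs. snd (prod_decode (a xs)))"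
    using rec_computable_diff[OF diag fst] by simp
qed

text \<open>A nonempty list is coded as \<open>Suc (prod_encode (hd, code of tl))\<close>, so head and tail
  are read off \<open>prod_decode (c - 1)\<close>; the junk value 0 for the head of the empty list is
  what \<open>nth_default 0\<close> returns beyond the end.\<close>

lemma prod_decode_0: "prod_decode 0 = (0, 0)"
  by (simp add: prod_decode_def prod_decode_aux.simps)

lemma list_encode_eq_0_iff: "list_encode xs = 0 \<longleftrightarrow> xs = []"
  by (cases xs) auto

lemma length_le_list_encode: "length xs \<le> list_encode xs"
  by (induction xs) (auto intro: le_trans[OF _ le_prod_encode_2])

lemma list_encode_tl: "list_encode (tl xs) = snd (prod_decode (list_encode xs - 1))"
  by (cases xs) (auto simp: prod_decode_0)

lemma nth_default_0_eq_hd_drop: "nth_default 0 xs i = fst (prod_decode (list_encode (drop i xs) - 1))"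
  by (cases "i < length xs") (auto simp: nth_default_def Cons_nth_drop_Suc[symmetric] prod_decode_0)

lemma rec_computable_list_drop:
  assumes a: "rec_computable k a" and i: "rec_computable k i"
  shows "rec_computable k (\<lambda>xs. list_encode (drop (i xs) (list_decode (a xs))))"
proof -
  have "list_encode (drop j ys) = rec_nat (list_encode ys) (\<lambda>_ acc. snd (prod_decode (acc - 1))) j"
    for j and ys :: "nat list"
    by (induction j) (simp_all add: drop_Suc tl_drop[symmetric] list_encode_tl)
  moreover have "rec_computable (Suc (Suc k)) (\<lambda>ys. snd (prod_decode (ys ! 1 - 1)))"
    by (intro rec_computable_snd_prod_decode rec_computable_diff rec_computable_nth rec_computable_const) auto
  note rec_computable_rec_nat[OF a this i]
  ultimately show ?thesis
    by simp
qed

lemma rec_computable_nth_default: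
  assumes "rec_computable k a" and "rec_computable k i"
  shows "rec_computable k (\<lambda>xs. nth_default 0 (list_decode (a xs)) (i xs))"
  unfolding nth_default_0_eq_hd_drop
  by (intro rec_computable_fst_prod_decode rec_computable_diff rec_computable_list_drop assms
      rec_computable_const)

lemma rec_computable_length:
  assumes a: "rec_computable k a"
  shows "rec_computable k (\<lambda>xs. length (list_decode (a xs)))"
proof -
  have count: "(\<Sum>j<x. of_bool (list_encode (drop j (list_decode x)) \<noteq> 0)) = length (list_decode x)"
    for x
  proof -
    have "(\<Sum>j<x. of_bool (j < length (list_decode x)) :: nat)
        = (\<Sum>j<x. of_bool (list_encode (drop j (list_decode x)) \<noteq> 0))"
      by (intro sum.cong) (simp_all add: list_encode_eq_0_iff)
    with sum_of_bool_less[where z = x and m = "length (list_decode x)"]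
      length_le_list_encode[of "list_decode x"] show ?thesis
      by (simp only: min_absorb2 list_decode_inverse)
  qed
  have "rec_decidable (Suc k) (\<lambda>ys. list_encode (drop (ys ! 0) (list_decode (a (drop 1 ys)))) \<noteq> 0)"
    using rec_computable_drop[OF a, of 1]
    by (intro rec_decidable_not rec_decidable_eq rec_computable_list_drop rec_computable_nth
        rec_computable_zero) auto
  from rec_computable_sum[OF this[unfolded rec_decidable_def] a]
  have "rec_computable k (\<lambda>xs. \<Sum>j<a xs. of_bool (list_encode (drop j (list_decode (a xs))) \<noteq> 0))"
    by (simp only: One_nat_def drop_Suc_Cons drop_0 nth_Cons_0)
  then show ?thesis
    by (simp only: count)
qed

lemma rec_decidable_member:
  assumes a: "rec_computable k a" and b: "rec_computable k b"
  shows "rec_decidable k (\<lambda>xs. b xs \<in> set (list_decode (a xs)))"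
proof -
  have member: "y \<in> set ys \<longleftrightarrow> (\<exists>j<length ys. nth_default 0 ys j = y)" for y and ys :: "nat list"
    by (auto simp: in_set_conv_nth nth_default_def)
  have "rec_decidable (Suc k) (\<lambda>ys. nth_default 0 (list_decode (a (drop 1 ys))) (ys ! 0) = b (drop 1 ys))"
    using rec_computable_drop[OF a, of 1] rec_computable_drop[OF b, of 1]
    by (intro rec_decidable_eq rec_computable_nth_default rec_computable_nth) auto
  from rec_decidable_bex_less[OF this rec_computable_length[OF a]]
  have "rec_decidable k (\<lambda>xs. \<exists>j<length (list_decode (a xs)). nth_default 0 (list_decode (a xs)) j = b xs)"
    by (simp only: One_nat_def drop_Suc_Cons drop_0 nth_Cons_0)
  with member show ?thesis
    by (simp only:)
qed

lemma rec_computable_list_encode_map: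
  assumes g: "rec_computable (Suc k) g" and n: "rec_computable k n"
  shows "rec_computable k (\<lambda>xs. list_encode (map (\<lambda>i. g (i # xs)) [0..<n xs]))"
proof -
  \<comment> \<open>The list is assembled back to front: after \<open>j\<close> steps it holds the last \<open>j\<close> entries.\<close>
  have build: "rec_nat 0 (\<lambda>j acc. Suc (prod_encode (f (m - Suc j), acc))) j = list_encode (map f [m - j..<m])"
    if "j \<le> m" for f :: "nat \<Rightarrow> nat" and j m
    using that
  proof (induction j)
    case (Suc j)
    then have "[m - Suc j..<m] = (m - Suc j) # [m - j..<m]"
      by (simp add: upt_conv_Cons Suc_diff_Suc)
    then show ?case
      using Suc by simp
  qed simp
  have "rec_computable (2 + k) (\<lambda>ys. n (drop 2 ys) - Suc (ys ! 0))"
    using rec_computable_drop[OF n, of 2] by (intro rec_computable_diff rec_computable_Suc rec_computable_nth) auto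
  from rec_computable_Cons_drop[OF g this]
  have "rec_computable (Suc (Suc k))
      (\<lambda>ys. Suc (prod_encode (g ((n (drop 2 ys) - Suc (ys ! 0)) # drop 2 ys), ys ! 1)))"
    by (intro rec_computable_Suc rec_computable_prod_encode rec_computable_nth) auto
  from rec_computable_rec_nat[OF rec_computable_zero this n]
  have "rec_computable k (\<lambda>xs. rec_nat 0 (\<lambda>j acc. Suc (prod_encode (g ((n xs - Suc j) # xs), acc))) (n xs))"
    by (simp only: numeral_2_eq_2 One_nat_def drop_Suc_Cons drop_0 nth_Cons_0 nth_Cons_Suc)
  then show ?thesis
    by (rule rec_computable_cong) (simp add: build[where f = "\<lambda>i. g (i # _)"])
qed

section \<open>The reduction automaton\<close>

lemma wt_nonneg:
  "well_formed A \<Longrightarrow> a < nletters A \<Longrightarrow> q < states A \<Longrightarrow> t < states A \<Longrightarrow> 0 \<le> wt A a q t"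
  unfolding well_formed_def wt_def nletters_def by (metis nth_mem)

lemma nu_LMC_bounds:
  assumes "is_LMC A" and "q < states A" and "w \<in> words A"
  shows "0 \<le> nu A q w \<and> nu A q w \<le> 1"
  using assms(2,3)
proof (induction w arbitrary: q)
  case (Cons a w)
  have a: "a < nletters A" and w: "w \<in> words A"
    using Cons.prems(2) by (auto simp: words_def)
  have "well_formed A"
    using assms(1) by (simp add: is_LMC_def)
  then have M_nonneg: "0 \<le> wt A b q t" if "b < nletters A" "t < states A" for b t
    using wt_nonneg that Cons.prems(1) by blast
  have "0 \<le> nu A q (a # w)"
    using Cons.IH[OF _ w] a M_nonneg by (auto intro!: sum_nonneg)
  moreover have "nu A q (a # w) \<le> (\<Sum>t<states A. wt A a q t)"
    using Cons.IH[OF _ w] a M_nonneg by (auto intro!: sum_mono mult_left_le)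
  moreover have "(\<Sum>t<states A. wt A a q t) \<le> 1"
  proof (cases "q \<in> finals A")
    case True
    then show ?thesis
      using assms(1) Cons.prems(1) a by (simp add: is_LMC_def)
  next
    case False
    have "(\<Sum>t<states A. wt A a q t) \<le> (\<Sum>b<nletters A. \<Sum>t<states A. wt A b q t)"
      using a M_nonneg by (intro member_le_sum[where f = "\<lambda>b. \<Sum>t<states A. wt A b q t"] sum_nonneg) auto
    also have "\<dots> = 1"
      using assms(1) Cons.prems(1) False by (simp add: is_LMC_def sum.swap[of _ "{..<nletters A}"])
    finally show ?thesis .
  qed
  ultimately show ?case
    by linarith
qed simp

lemma round_bound:
  fixes x y X C :: real
  assumes "0 \<le> x" "x \<le> 1" "0 \<le> y" "y \<le> 1" "x \<le> C * y" "0 < C" "X \<le> C / (1 + C)"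
  shows "1/2 * (x + (1 - x) * X) + 1/2 * ((1 - y) * X) \<le> C / (1 + C)"
proof -
  define c where "c = C / (1 + C)"
  have "X * (2 - (x + y)) \<le> c * (2 - (x + y))"
    using assms unfolding c_def by (intro mult_right_mono) auto
  moreover have "x * (1 + C) \<le> C * (x + y)"
    using assms by (simp add: algebra_simps)
  then have "x \<le> c * (x + y)"
    using assms unfolding c_def by (simp add: pos_le_divide_eq)
  ultimately have "x + X * (2 - (x + y)) \<le> 2 * c"
    by (simp add: algebra_simps)
  moreover have "1/2 * (x + (1 - x) * X) + 1/2 * ((1 - y) * X) = (x + X * (2 - (x + y))) / 2"
    by (simp add: field_simps)
  ultimately have "1/2 * (x + (1 - x) * X) + 1/2 * ((1 - y) * X) \<le> c"
    by (simp only:) (simp add: divide_le_eq)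
  then show ?thesis
    unfolding c_def .
qed

lemma rounds_approach_one:
  fixes x y \<delta> :: real
  assumes "0 \<le> x" "x \<le> 1" "0 \<le> y" "y \<le> 1" "0 < \<delta>" "y < \<delta> * x / 2"
  shows "0 < x + y" and "\<exists>m. 1 - \<delta> < x / (x + y) * (1 - (1 - (x + y) / 2) ^ m)"
proof -
  define L where "L = x / (x + y)"
  define \<rho> where "\<rho> = 1 - (x + y) / 2"
  have "0 < \<delta> * x"
    using assms by linarith
  then show pos: "0 < x + y"
    using assms by (simp add: zero_less_mult_iff)
  have "y * (1 - \<delta> / 2) \<le> y"
    using assms by (simp add: algebra_simps)
  then have "(1 - \<delta> / 2) * (x + y) < x"
    using assms(6) by (simp add: algebra_simps)
  then have L_big: "1 - \<delta> / 2 < L"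
    unfolding L_def using pos by (simp add: pos_less_divide_eq)
  have "L \<le> 1"
    unfolding L_def using assms pos by simp
  have "0 \<le> \<rho>" "\<rho> < 1"
    unfolding \<rho>_def using assms pos by auto
  then obtain m where m: "\<rho> ^ m < \<delta> / 2"
    using real_arch_pow_inv[of "\<delta> / 2" \<rho>] assms(5) by auto
  have "L * \<rho> ^ m \<le> \<rho> ^ m"
    using mult_right_mono[OF \<open>L \<le> 1\<close> zero_le_power[OF \<open>0 \<le> \<rho>\<close>]] by simp
  then have "1 - \<delta> < L * (1 - \<rho> ^ m)"
    using L_big m by (simp add: algebra_simps)
  then show "\<exists>m. 1 - \<delta> < x / (x + y) * (1 - (1 - (x + y) / 2) ^ m)"
    unfolding L_def \<rho>_def by blast
qed

lemma sum_lessThan_add: "(\<Sum>i<m + (l::nat). f i) = (\<Sum>i<m. f i) + (\<Sum>i<l. f (m + i))"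
  by (induction l) (auto simp: add.assoc)

lemma sum_lessThan_mult: "(\<Sum>i<c * (d::nat). f i) = (\<Sum>b<c. \<Sum>t<d. f (b * d + t))"
  by (induction c) (simp_all add: add.commute[of d] sum_lessThan_add)

lemma sum_lessThan_delta_mult:
  fixes f :: "nat \<Rightarrow> 'a::semiring_1"
  assumes "c < L"
  shows "(\<Sum>t<L. (if t = c then 1 else 0) * f t) = f c"
proof -
  have "(\<Sum>t<L. (if t = c then 1 else 0) * f t) = (\<Sum>t<L. if t = c then f t else 0)"
    by (intro sum.cong) auto
  then show ?thesis
    using assms by simp
qed

text \<open>States of the automaton: 0 is the start, 1 the accepting and 2 the rejecting sink,
  \<open>4 + q\<close> and \<open>4 + n + q\<close> are the two copies of the LMC state \<open>q\<close>, and 3 together with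
  \<open>4 + 2 n + b n + t\<close> (for \<open>b < k\<close>, \<open>t < n\<close>) are waiting states. Letters below \<open>k\<close> are those
  of the LMC; \<open>k\<close> is the end marker and \<open>k + 1\<close> the start marker. A copy of a non-final
  state \<open>q\<close> reading \<open>a < k\<close> follows the LMC and sends the weight \<open>M b q t\<close> of every other
  letter \<open>b\<close> to the waiting state \<open>(b, t)\<close>. The rows are therefore stochastic without any
  arithmetic on the weights, and since the weight type is a parameter, the same term also
  describes the codes of the weights.\<close>

definition reduction_weight ::
    "nat \<Rightarrow> nat \<Rightarrow> (nat \<Rightarrow> bool) \<Rightarrow> nat \<Rightarrow> nat \<Rightarrow> (nat \<Rightarrow> nat \<Rightarrow> nat \<Rightarrow> 'v) \<Rightarrow> 'v \<Rightarrow> 'v \<Rightarrow> 'v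
     \<Rightarrow> nat \<Rightarrow> nat \<Rightarrow> nat \<Rightarrow> 'v" where
  "reduction_weight n k final s s' M zero one half a p t =
    (if p = 0 then
       (if a = Suc k then (if t = 4 + s \<or> t = 4 + n + s' then half else zero)
        else (if t = 2 then one else zero))
     else if p = 1 then (if t = 1 then one else zero)
     else if p = 2 then (if t = 2 then one else zero)
     else if p = 3 \<or> 4 + 2 * n \<le> p then
       (if a < k then (if t = p then one else zero)
        else if a = k then (if t = 0 then one else zero)
        else (if t = 2 then one else zero))
     else if a < k then
       (if final (if 4 + n \<le> p then p - (4 + n) else p - 4) then (if t = 3 then one else zero)
        else if p < 4 + n \<and> 4 \<le> t \<and> t < 4 + n then M a (p - 4) (t - 4)
        else if 4 + n \<le> p \<and> 4 + n \<le> t \<and> t < 4 + 2 * n then M a (p - (4 + n)) (t - (4 + n))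
        else if 4 + 2 * n \<le> t \<and> t < 4 + 2 * n + k * n \<and> (t - (4 + 2 * n)) div n \<noteq> a
          then M ((t - (4 + 2 * n)) div n) (if 4 + n \<le> p then p - (4 + n) else p - 4) ((t - (4 + 2 * n)) mod n)
        else zero)
     else if a = k then
       (if final (if 4 + n \<le> p then p - (4 + n) else p - 4)
        then (if t = (if 4 + n \<le> p then 2 else 1) then one else zero)
        else (if t = 0 then one else zero))
     else (if t = 2 then one else zero))"

lemma reduction_weight_map:
  "f (reduction_weight n k final s s' M zero one half a p t)
    = reduction_weight n k final s s' (\<lambda>b q t. f (M b q t)) (f zero) (f one) (f half) a p t"
  unfolding reduction_weight_def by (simp only: if_distrib[of f])

lemma reduction_weight_cong:
  assumes "\<And>b q t. b < k \<Longrightarrow> q < n \<Longrightarrow> t < n \<Longrightarrow> M b q t = M' b q t"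
  shows "reduction_weight n k final s s' M zero one half a p t
    = reduction_weight n k final s s' M' zero one half a p t"
proof -
  have "(t - (4 + 2 * n)) div n < k \<and> (t - (4 + 2 * n)) mod n < n"
    if "4 + 2 * n \<le> t" "t < 4 + 2 * n + k * n"
  proof -
    have "0 < n"
      using that by (cases n) auto
    then show ?thesis
      using that by (simp add: div_less_iff_less_mult mult.commute)
  qed
  then show ?thesis
    unfolding reduction_weight_def using assms by (auto simp del: One_nat_def)
qed

lemma reduction_weight_closed:
  assumes "P zero" "P one" "P half" "\<And>b q t. P (M b q t)"
  shows "P (reduction_weight n k final s s' M zero one half a p t)"
proof -
  have if_closed: "P x \<Longrightarrow> P y \<Longrightarrow> P (if c then x else y)" for c x y
    by simp
  show ?thesis
    unfolding reduction_weight_def by (intro if_closed assms)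
qed

lemma Cons_in_words_iff [simp]: "a # w \<in> words A \<longleftrightarrow> a < nletters A \<and> w \<in> words A"
  by (simp add: words_def)

lemma append_in_words_iff [simp]: "u @ v \<in> words A \<longleftrightarrow> u \<in> words A \<and> v \<in> words A"
  by (auto simp: words_def)

lemma split_at_first_not_less:
  fixes v :: "nat list"
  obtains "\<forall>a\<in>set v. a < k"
    | w b u where "v = w @ b # u" "\<forall>a\<in>set w. a < k" "k \<le> b"
proof (cases "dropWhile (\<lambda>a. a < k) v")
  case Nil
  then show ?thesis
    using that(1) by (simp add: dropWhile_eq_Nil_conv)
next
  case (Cons b u)
  then show ?thesis
    using that(2)[of "takeWhile (\<lambda>a. a < k) v" b u]
    by (auto simp: dropWhile_eq_Cons_conv dest: set_takeWhileD)
qed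

lemma sum_affine_redistribute:
  fixes m x :: "nat \<Rightarrow> 'a::comm_ring_1"
  assumes "(\<Sum>t<L. m t) + Z = 1"
  shows "(\<Sum>t<L. m t * (x t * \<alpha> + (1 - x t) * \<beta>)) + Z * \<beta>
    = (\<Sum>t<L. m t * x t) * \<alpha> + (1 - (\<Sum>t<L. m t * x t)) * \<beta>"
proof -
  have "(\<Sum>t<L. m t * (x t * \<alpha> + (1 - x t) * \<beta>))
      = (\<Sum>t<L. (m t * x t) * \<alpha> + m t * \<beta> - (m t * x t) * \<beta>)"
    by (intro sum.cong) (simp_all add: algebra_simps)
  also have "\<dots> = (\<Sum>t<L. m t * x t) * \<alpha> + (\<Sum>t<L. m t) * \<beta> - (\<Sum>t<L. m t * x t) * \<beta>"
    by (simp add: sum.distrib sum_subtractf sum_distrib_right)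
  finally have sum: "(\<Sum>t<L. m t * (x t * \<alpha> + (1 - x t) * \<beta>))
      = (\<Sum>t<L. m t * x t) * \<alpha> + (\<Sum>t<L. m t) * \<beta> - (\<Sum>t<L. m t * x t) * \<beta>" .
  have Z: "Z = 1 - (\<Sum>t<L. m t)"
    using assms by (simp add: eq_diff_eq add.commute)
  show ?thesis
    unfolding sum Z by (simp add: algebra_simps)
qed

locale big_O_instance =
  fixes A :: wa and s s' :: nat
  assumes LMC: "is_LMC A" and s_less: "s < states A" and s'_less: "s' < states A"
begin

abbreviation "n \<equiv> states A"
abbreviation "k \<equiv> nletters A"
abbreviation "M \<equiv> wt A"
abbreviation "F \<equiv> finals A"

definition "N = 4 + 2 * n + k * n"

definition "weight = reduction_weight n k (\<lambda>q. q \<in> F) s s' M (0::rat) 1 (1/2)"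

definition "PA = (N, map (\<lambda>a. map (\<lambda>p. map (weight a p) [0..<N]) [0..<N]) [0..<k + 2], [1])"

abbreviation copy :: "nat \<Rightarrow> nat \<Rightarrow> nat" where
  "copy e q \<equiv> 4 + e * n + q"

definition waiting :: "nat \<Rightarrow> bool" where
  "waiting z \<longleftrightarrow> z = 3 \<or> (4 + 2 * n \<le> z \<and> z < N)"

lemma well_formed: "well_formed A"
  using LMC by (simp add: is_LMC_def)

lemma M_final: "q < n \<Longrightarrow> q \<in> F \<Longrightarrow> a < k \<Longrightarrow> t < n \<Longrightarrow> M a q t = 0"
  using LMC unfolding is_LMC_def by blast

lemma M_row_sum: "q < n \<Longrightarrow> q \<notin> F \<Longrightarrow> (\<Sum>b<k. \<Sum>t<n. M b q t) = 1"
  using LMC unfolding is_LMC_def by (simp add: sum.swap[of _ "{..<k}"])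

lemma M_row_sum_except:
  assumes "q < n" "q \<notin> F" "a < k"
  shows "(\<Sum>t<n. M a q t) + (\<Sum>b<k. \<Sum>t<n. if b = a then 0 else M b q t) = 1"
proof -
  have "(\<Sum>b<k. \<Sum>t<n. M b q t)
      = (\<Sum>b<k. (if b = a then \<Sum>t<n. M b q t else 0) + (\<Sum>t<n. if b = a then 0 else M b q t))"
    by (intro sum.cong) auto
  also have "\<dots> = (\<Sum>t<n. M a q t) + (\<Sum>b<k. \<Sum>t<n. if b = a then 0 else M b q t)"
    using assms by (simp add: sum.distrib)
  finally show ?thesis
    using M_row_sum[OF assms(1,2)] by simp
qed

lemma states_PA: "states PA = N"
  by (simp add: PA_def states_def)

lemma nletters_PA: "nletters PA = k + 2"
  by (simp add: PA_def nletters_def)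

lemma wt_PA: "a < k + 2 \<Longrightarrow> p < N \<Longrightarrow> t < N \<Longrightarrow> wt PA a p t = weight a p t"
  by (simp add: PA_def wt_def del: upt_Suc)

lemma finals_PA [simp]: "finals PA = {1}"
  by (simp add: PA_def finals_def)

lemma N_ge: "4 + 2 * n \<le> N"
  by (simp add: N_def)

lemma copy_less_N: "e \<le> 1 \<Longrightarrow> q < n \<Longrightarrow> copy e q < N"
  unfolding N_def by (cases e) auto

lemma waiting_less_N: "waiting z \<Longrightarrow> z < N"
  using N_ge unfolding waiting_def by auto

lemma waiting_block: "b < k \<Longrightarrow> t < n \<Longrightarrow> waiting (4 + 2 * n + b * n + t)"
proof -
  assume "b < k" "t < n"
  then have "b * n + t < Suc b * n"
    by simp
  also have "\<dots> \<le> k * n"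
    using \<open>b < k\<close> by (intro mult_right_mono) auto
  finally show ?thesis
    unfolding waiting_def N_def by simp
qed

lemma weight_start:
  "weight a 0 t = (if a = Suc k then (if t = copy 0 s \<or> t = copy 1 s' then 1/2 else 0)
                   else (if t = 2 then 1 else 0))"
  by (simp add: weight_def reduction_weight_def)

lemma weight_accept: "weight a 1 t = (if t = 1 then 1 else 0)"
  by (simp add: weight_def reduction_weight_def)

lemma weight_reject: "weight a 2 t = (if t = 2 then 1 else 0)"
  by (simp add: weight_def reduction_weight_def)

lemma sum_states:
  "(\<Sum>t<N. f t) = f 0 + f 1 + f 2 + f 3 + (\<Sum>t<n. f (4 + t)) + (\<Sum>t<n. f (4 + n + t))
     + (\<Sum>b<k. \<Sum>t<n. f (4 + 2 * n + b * n + t))"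
proof -
  have "(\<Sum>t<N. f t) = (\<Sum>t<4 + n + n. f t) + (\<Sum>i<k * n. f (4 + n + n + i))"
    unfolding N_def by (simp only: sum_lessThan_add mult_2 add.assoc)
  also have "(\<Sum>t<4 + n + n. f t) = (\<Sum>t<4. f t) + (\<Sum>t<n. f (4 + t)) + (\<Sum>t<n. f (4 + n + t))"
    by (simp only: sum_lessThan_add)
  also have "(\<Sum>t<4. f t) = f 0 + f 1 + f 2 + f 3"
    by (simp add: numeral_eq_Suc)
  also have "(\<Sum>i<k * n. f (4 + n + n + i)) = (\<Sum>b<k. \<Sum>t<n. f (4 + 2 * n + b * n + t))"
    by (simp only: sum_lessThan_mult) (simp add: algebra_simps)
  finally show ?thesis
    by simp
qed


lemma weight_waiting:
  assumes "waiting p"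
  shows "weight a p t =
    (if a < k then (if t = p then 1 else 0)
     else if a = k then (if t = 0 then 1 else 0)
     else (if t = 2 then 1 else 0))"
proof -
  have "p \<noteq> 0" "p \<noteq> 1" "p \<noteq> 2" "p = 3 \<or> 4 + 2 * n \<le> p"
    using assms unfolding waiting_def by auto
  then show ?thesis
    unfolding weight_def reduction_weight_def by simp
qed

lemma weight_copy_final:
  assumes "q < n" "q \<in> F" "e \<le> 1"
  shows "weight a (copy e q) t =
    (if a < k then (if t = 3 then 1 else 0)
     else if a = k then (if t = (if e = 0 then 1 else 2) then 1 else 0)
     else (if t = 2 then 1 else 0))"
  using assms by (cases e) (simp_all add: weight_def reduction_weight_def)

lemma weight_copy_nonfinal_high:
  assumes "q < n" "q \<notin> F" "e \<le> 1" "k \<le> a"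
  shows "weight a (copy e q) t = (if a = k then (if t = 0 then 1 else 0) else (if t = 2 then 1 else 0))"
  using assms by (cases e) (simp_all add: weight_def reduction_weight_def)

lemma sum_copy_nonfinal_row:
  assumes q: "q < n" "q \<notin> F" and e: "e \<le> 1" and a: "a < k"
  shows "(\<Sum>t<N. weight a (copy e q) t * f t)
    = (\<Sum>t<n. M a q t * f (copy e t))
      + (\<Sum>b<k. \<Sum>t<n. (if b = a then 0 else M b q t) * f (4 + 2 * n + b * n + t))"
proof -
  have low: "weight a (copy e q) t = 0" if "t < 4" for t
    using q e a that by (cases e) (simp_all add: weight_def reduction_weight_def)
  have left: "weight a (copy e q) (4 + t) = (if e = 0 then M a q t else 0)" if "t < n" for t
    using q e a that by (cases e) (simp_all add: weight_def reduction_weight_def)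
  have right: "weight a (copy e q) (4 + n + t) = (if e = 1 then M a q t else 0)" if "t < n" for t
    using q e a that by (cases e) (simp_all add: weight_def reduction_weight_def)
  have block: "weight a (copy e q) (4 + 2 * n + b * n + t) = (if b = a then 0 else M b q t)"
    if "b < k" "t < n" for b t
  proof -
    have "(b * n + t) div n = b" "(b * n + t) mod n = t"
      using that by auto
    moreover have "4 + 2 * n + b * n + t < 4 + 2 * n + k * n"
      using waiting_block[OF that] waiting_less_N by (simp add: N_def)
    ultimately show ?thesis
      using q e a that by (cases e) (simp_all add: weight_def reduction_weight_def)
  qed
  have "(\<Sum>t<n. weight a (copy e q) (4 + t) * f (4 + t))
      = (\<Sum>t<n. (if e = 0 then M a q t else 0) * f (4 + t))"
    "(\<Sum>t<n. weight a (copy e q) (4 + n + t) * f (4 + n + t))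
      = (\<Sum>t<n. (if e = 1 then M a q t else 0) * f (4 + n + t))"
    by (auto intro!: sum.cong simp: left right)
  then have "(\<Sum>t<n. weight a (copy e q) (4 + t) * f (4 + t))
      + (\<Sum>t<n. weight a (copy e q) (4 + n + t) * f (4 + n + t))
      = (\<Sum>t<n. M a q t * f (copy e t))"
    using e by (cases e) simp_all
  then show ?thesis
    unfolding sum_states by (simp add: low block)
qed

lemma weight_nonneg: "0 \<le> weight a p t"
proof -
  define M' where "M' b q t = (if b < k \<and> q < n \<and> t < n then M b q t else 0)" for b q t
  have "weight a p t = reduction_weight n k (\<lambda>q. q \<in> F) s s' M' 0 1 (1/2) a p t"
    unfolding weight_def by (rule reduction_weight_cong) (simp add: M'_def)
  also have "0 \<le> \<dots>"
    by (rule reduction_weight_closed[where P = "\<lambda>x. 0 \<le> x"]) (simp_all add: M'_def wt_nonneg[OF well_formed])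
  finally show ?thesis .
qed

lemma state_cases:
  assumes "p < N"
  obtains "p = 0" | "p = 1" | "p = 2" | "waiting p" | e q where "e \<le> 1" "q < n" "p = copy e q"
proof -
  consider "p < 3" | "waiting p" | "4 \<le> p \<and> p < 4 + n" | "4 + n \<le> p \<and> p < 4 + 2 * n"
    using assms unfolding waiting_def by linarith
  then show ?thesis
  proof cases
    case 1
    then have "p = 0 \<or> p = 1 \<or> p = 2"
      by linarith
    then show ?thesis
      using that(1-3) by blast
  next
    case 3
    then show ?thesis
      using that(5)[of 0 "p - 4"] by simp
  next
    case 4
    then show ?thesis
      using that(5)[of 1 "p - (4 + n)"] by simp
  qed (use that in blast)
qed

lemma row_sum_start:
  assumes "a < k + 2"
  shows "(\<Sum>t<N. weight a 0 t) = 1"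
proof (cases "a = Suc k")
  case True
  have "copy 0 s < N" "copy 1 s' < N" "copy 0 s \<noteq> copy 1 s'"
    using s_less s'_less N_ge by auto
  then have "weight a 0 t = (if t = copy 0 s then 1/2 else 0) + (if t = copy 1 s' then 1/2 else 0)" for t
    by (simp add: True weight_start)
  then show ?thesis
    using \<open>copy 0 s < N\<close> \<open>copy 1 s' < N\<close> by (simp add: sum.distrib)
next
  case False
  then show ?thesis
    using N_ge by (simp add: weight_start)
qed

lemma row_sum_copy:
  assumes a: "a < k + 2" and "e \<le> 1" "q < n"
  shows "(\<Sum>t<N. weight a (copy e q) t) = 1"
proof (cases "q \<in> F")
  case True
  then show ?thesis
    using N_ge assms by (cases "a < k"; cases "a = k") (simp_all add: weight_copy_final)
next
  case nonfinal: False
  show ?thesis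
  proof (cases "a < k")
    case True
    then show ?thesis
      using sum_copy_nonfinal_row[OF \<open>q < n\<close> nonfinal \<open>e \<le> 1\<close> True, of "\<lambda>_. 1"]
        M_row_sum_except[OF \<open>q < n\<close> nonfinal True]
      by simp
  next
    case False
    then show ?thesis
      using N_ge assms nonfinal by (cases "a = k") (simp_all add: weight_copy_nonfinal_high)
  qed
qed

lemma row_sum_weight:
  assumes a: "a < k + 2" and p: "p < N"
  shows "(\<Sum>t<N. weight a p t) = 1"
  using p
proof (cases rule: state_cases)
  case 2
  then show ?thesis
    using N_ge by (simp only: weight_accept) simp
next
  case 3
  then show ?thesis
    using N_ge by (simp only: weight_reject) simp
next
  case 4
  then show ?thesis
    using N_ge waiting_less_N[OF 4] by (cases "a < k"; cases "a = k") (simp_all add: weight_waiting)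
next
  case 1
  then show ?thesis
    using row_sum_start[OF a] by simp
next
  case (5 e q)
  then show ?thesis
    using row_sum_copy[OF a 5(1,2)] by simp
qed

lemma PA_is_PA: "is_PA PA 0"
proof -
  have "well_formed PA"
    unfolding well_formed_def using N_ge weight_nonneg by (auto simp: PA_def states_def finals_def)
  moreover have "(\<Sum>t<states PA. wt PA a p t) = 1" if "p < states PA" "a < nletters PA" for p a
    using that row_sum_weight by (simp add: states_PA nletters_PA wt_PA)
  ultimately show ?thesis
    unfolding is_PA_def using N_ge by (simp add: states_PA)
qed


lemma nu_PA_Cons: "a < k + 2 \<Longrightarrow> p < N \<Longrightarrow> nu PA p (a # v) = (\<Sum>t<N. weight a p t * nu PA t v)"
  by (simp add: states_PA wt_PA)

lemma nu_PA_deterministic: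
  assumes "a < k + 2" "p < N" "c < N" "\<And>t. weight a p t = (if t = c then 1 else 0)"
  shows "nu PA p (a # v) = nu PA c v"
proof -
  have "nu PA p (a # v) = (\<Sum>t<N. (if t = c then 1 else 0) * nu PA t v)"
    using assms(1,2) by (simp only: nu_PA_Cons assms(4))
  then show ?thesis
    using assms(3) by (simp only: sum_lessThan_delta_mult)
qed

lemma nu_accept: "v \<in> words PA \<Longrightarrow> nu PA 1 v = 1"
proof (induction v)
  case (Cons a v)
  have "nu PA 1 (a # v) = nu PA 1 v"
    by (rule nu_PA_deterministic) (use Cons.prems N_ge in \<open>simp_all add: weight_accept[simplified] nletters_PA\<close>)
  then show ?case
    using Cons by simp
qed simp

lemma nu_reject: "v \<in> words PA \<Longrightarrow> nu PA 2 v = 0"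
proof (induction v)
  case (Cons a v)
  have "nu PA 2 (a # v) = nu PA 2 v"
    by (rule nu_PA_deterministic) (use Cons.prems N_ge in \<open>simp_all add: weight_reject nletters_PA\<close>)
  then show ?case
    using Cons by simp
qed simp

lemma nu_start_other_letter: "a \<le> k \<Longrightarrow> v \<in> words PA \<Longrightarrow> nu PA 0 (a # v) = 0"
  using nu_PA_deterministic[of a 0 2 v] N_ge by (simp add: weight_start nu_reject)

lemma nu_start_marker:
  "nu PA 0 (Suc k # v) = 1/2 * nu PA (copy 0 s) v + 1/2 * nu PA (copy 1 s') v"
proof -
  have less: "copy 0 s < N" "copy 1 s' < N"
    using s_less s'_less N_ge by auto
  then have "weight (Suc k) 0 t * nu PA t v
      = (if t = copy 0 s then 1 else 0) * (1/2 * nu PA t v) + (if t = copy 1 s' then 1 else 0) * (1/2 * nu PA t v)"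
    for t
    using s_less by (simp add: weight_start)
  then have "nu PA 0 (Suc k # v)
      = (\<Sum>t<N. (if t = copy 0 s then 1 else 0) * (1/2 * nu PA t v))
        + (\<Sum>t<N. (if t = copy 1 s' then 1 else 0) * (1/2 * nu PA t v))"
    using N_ge by (simp only: nu_PA_Cons sum.distrib)
  then show ?thesis
    using less by (simp only: sum_lessThan_delta_mult)
qed

lemma nu_waiting_letters: "waiting z \<Longrightarrow> w \<in> words A \<Longrightarrow> nu PA z (w @ v) = nu PA z v"
proof (induction w)
  case (Cons a w)
  have "nu PA z (a # w @ v) = nu PA z (w @ v)"
    by (rule nu_PA_deterministic) (use Cons.prems waiting_less_N in \<open>simp_all add: weight_waiting\<close>)
  then show ?case
    using Cons by simp
qed simp

lemma nu_waiting_end_marker: "waiting z \<Longrightarrow> nu PA z (k # v) = nu PA 0 v"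
  using nu_PA_deterministic[of k z 0 v] waiting_less_N N_ge by (simp add: weight_waiting)

lemma nu_waiting_start_marker: "waiting z \<Longrightarrow> v \<in> words PA \<Longrightarrow> nu PA z (Suc k # v) = 0"
  using nu_PA_deterministic[of "Suc k" z 2 v] waiting_less_N N_ge by (simp add: weight_waiting nu_reject)

lemma nu_waiting_Nil: "waiting z \<Longrightarrow> nu PA z [] = 0"
  unfolding waiting_def by auto

lemma nu_copy_end_marker:
  assumes "v \<in> words PA" "e \<le> 1" "q < n"
  shows "nu PA (copy e q) (k # v) = (if q \<in> F then (if e = 0 then 1 else 0) else nu PA 0 v)"
proof -
  define c :: nat where "c = (if q \<in> F then (if e = 0 then 1 else 2) else 0)"
  have "weight k (copy e q) t = (if t = c then 1 else 0)" for t
    using assms(2,3) by (cases "q \<in> F") (simp_all add: c_def weight_copy_final weight_copy_nonfinal_high)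
  then have "nu PA (copy e q) (k # v) = nu PA c v"
    using copy_less_N[OF assms(2,3)] N_ge by (intro nu_PA_deterministic) (auto simp: c_def)
  then show ?thesis
    using nu_accept[OF assms(1)] nu_reject[OF assms(1)] by (simp add: c_def)
qed

lemma nu_copy_start_marker:
  assumes "v \<in> words PA" "e \<le> 1" "q < n"
  shows "nu PA (copy e q) (Suc k # v) = 0"
proof -
  have "weight (Suc k) (copy e q) t = (if t = 2 then 1 else 0)" for t
    using assms(2,3) by (cases "q \<in> F") (simp_all add: weight_copy_final weight_copy_nonfinal_high)
  then have "nu PA (copy e q) (Suc k # v) = nu PA 2 v"
    using copy_less_N[OF assms(2,3)] N_ge by (intro nu_PA_deterministic) auto
  then show ?thesis
    using assms(1) by (simp add: nu_reject)
qed

lemma nu_copy_final_letter: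
  assumes "a < k" "e \<le> 1" "q < n" "q \<in> F"
  shows "nu PA (copy e q) (a # v) = nu PA 3 v"
  by (rule nu_PA_deterministic) (use assms copy_less_N[OF assms(2,3)] N_ge in \<open>simp_all add: weight_copy_final\<close>)

lemma nu_copy_nonfinal_letter:
  assumes "a < k" "e \<le> 1" "q < n" "q \<notin> F"
  shows "nu PA (copy e q) (a # v) = (\<Sum>t<n. M a q t * nu PA (copy e t) v)
    + (\<Sum>b<k. \<Sum>t<n. (if b = a then 0 else M b q t) * nu PA (4 + 2 * n + b * n + t) v)"
proof -
  have "nu PA (copy e q) (a # v) = (\<Sum>t<N. weight a (copy e q) t * nu PA t v)"
    using assms copy_less_N[OF assms(2,3)] by (intro nu_PA_Cons) simp_all
  also have "\<dots> = (\<Sum>t<n. M a q t * nu PA (copy e t) v)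
    + (\<Sum>b<k. \<Sum>t<n. (if b = a then 0 else M b q t) * nu PA (4 + 2 * n + b * n + t) v)"
    by (rule sum_copy_nonfinal_row[OF assms(3,4,2,1)])
  finally show ?thesis .
qed

lemma nu_copy_simulation:
  assumes copies: "\<And>e t. e \<le> 1 \<Longrightarrow> t < n \<Longrightarrow> nu PA (copy e t) u = (if t \<in> F then acc e else rej)"
    and waits: "\<And>z. waiting z \<Longrightarrow> nu PA z u = rej"
    and "w \<in> words A" "q < n" "e \<le> 1"
  shows "nu PA (copy e q) (w @ u) = nu A q w * acc e + (1 - nu A q w) * rej"
  using assms(3-5)
proof (induction w arbitrary: q)
  case Nil
  then show ?case
    using copies[of e q] by simp
next
  case (Cons a w)
  have a: "a < k" and w: "w \<in> words A" and q: "q < n"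
    using Cons.prems by auto
  have waits_w: "nu PA z (w @ u) = rej" if "waiting z" for z
    using nu_waiting_letters[OF that w] waits[OF that] by simp
  show ?case
  proof (cases "q \<in> F")
    case True
    have "nu PA 3 (w @ u) = rej"
      by (rule waits_w) (simp add: waiting_def)
    moreover have "nu A q (a # w) = 0"
      using M_final[OF q True a] by simp
    ultimately show ?thesis
      using nu_copy_final_letter[OF a \<open>e \<le> 1\<close> q True] by simp
  next
    case False
    let ?x = "\<lambda>t. nu A t w"
    have "nu PA (copy e q) (a # w @ u) = (\<Sum>t<n. M a q t * (?x t * acc e + (1 - ?x t) * rej))
        + (\<Sum>b<k. \<Sum>t<n. if b = a then 0 else M b q t) * rej"
      using nu_copy_nonfinal_letter[OF a \<open>e \<le> 1\<close> q False] Cons.IH[OF w _ \<open>e \<le> 1\<close>]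
        waits_w[OF waiting_block]
      by (simp add: sum_distrib_right)
    also have "\<dots> = (\<Sum>t<n. M a q t * ?x t) * acc e + (1 - (\<Sum>t<n. M a q t * ?x t)) * rej"
      by (rule sum_affine_redistribute[OF M_row_sum_except[OF q False a]])
    finally show ?thesis
      by simp
  qed
qed

lemma nu_round:
  assumes "w \<in> words A" "u \<in> words PA"
  shows "nu PA 0 (Suc k # w @ k # u)
    = 1/2 * (nu A s w + (1 - nu A s w) * nu PA 0 u) + 1/2 * ((1 - nu A s' w) * nu PA 0 u)"
proof -
  have "nu PA (copy e q) (w @ k # u) = nu A q w * (if e = 0 then 1 else 0) + (1 - nu A q w) * nu PA 0 u"
    if "q < n" "e \<le> 1" for q e
    using nu_copy_end_marker[OF assms(2)] nu_waiting_end_marker by (intro nu_copy_simulation assms(1) that) auto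
  from this[OF s_less, of 0] this[OF s'_less, of 1] show ?thesis
    unfolding nu_start_marker by simp
qed

lemma nu_round_unfinished:
  assumes "w \<in> words A"
  shows "nu PA 0 (Suc k # w) = 0"
proof -
  have "nu PA (copy e q) (w @ []) = nu A q w * 0 + (1 - nu A q w) * 0" if "q < n" "e \<le> 1" for q e
    using nu_waiting_Nil by (intro nu_copy_simulation assms that) (auto simp: waiting_def)
  from this[OF s_less, of 0] this[OF s'_less, of 1] show ?thesis
    unfolding nu_start_marker by simp
qed

lemma nu_round_interrupted:
  assumes "w \<in> words A" "u \<in> words PA"
  shows "nu PA 0 (Suc k # w @ Suc k # u) = 0"
proof -
  have "nu PA (copy e q) (w @ Suc k # u) = nu A q w * 0 + (1 - nu A q w) * 0" if "q < n" "e \<le> 1" for q e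
    using nu_copy_start_marker[OF assms(2)] nu_waiting_start_marker[OF _ assms(2)]
    by (intro nu_copy_simulation assms(1) that) auto
  from this[OF s_less, of 0] this[OF s'_less, of 1] show ?thesis
    unfolding nu_start_marker by simp
qed

lemma nu_start_cases:
  assumes "v \<in> words PA"
  obtains "nu PA 0 v = 0"
    | w u where "v = Suc k # w @ k # u" "w \<in> words A" "u \<in> words PA"
proof (cases v)
  case (Cons a v')
  have "a < k + 2" and v': "v' \<in> words PA"
    using assms Cons by (auto simp: nletters_PA)
  show ?thesis
  proof (cases "a \<le> k")
    case True
    then show ?thesis
      using that(1) nu_start_other_letter[OF True v'] Cons by simp
  next
    case False
    with \<open>a < k + 2\<close> have v: "v = Suc k # v'"
      using Cons by simp
    show ?thesis
    proof (cases v' k rule: split_at_first_not_less)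
      case 1
      then have "v' \<in> words A"
        by (simp add: words_def)
      then show ?thesis
        using that(1) nu_round_unfinished v by simp
    next
      case (2 w b u)
      then have w: "w \<in> words A" and u: "u \<in> words PA" and "b < k + 2"
        using v' by (auto simp: words_def nletters_PA)
      with \<open>k \<le> b\<close> consider "b = k" | "b = Suc k"
        by linarith
      then show ?thesis
        using that nu_round_interrupted[OF w u] v 2(1) w u by cases simp_all
    qed
  qed
qed (use that in simp)

lemma nu_start_le_if_bounded:
  assumes C: "0 < C" and bounded: "\<forall>w\<in>words A. real_of_rat (nu A s w) \<le> C * real_of_rat (nu A s' w)"
  shows "v \<in> words PA \<Longrightarrow> real_of_rat (nu PA 0 v) \<le> C / (1 + C)"
proof (induction "length v" arbitrary: v rule: less_induct)
  case less
  from less.prems show ?case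
  proof (cases rule: nu_start_cases)
    case 1
    then show ?thesis
      using C by simp
  next
    case (2 w u)
    define x where "x = real_of_rat (nu A s w)"
    define y where "y = real_of_rat (nu A s' w)"
    define X where "X = real_of_rat (nu PA 0 u)"
    have "X \<le> C / (1 + C)"
      unfolding X_def using less.hyps 2 by simp
    moreover have "0 \<le> x" "x \<le> 1" "0 \<le> y" "y \<le> 1"
      using nu_LMC_bounds[OF LMC s_less \<open>w \<in> words A\<close>] nu_LMC_bounds[OF LMC s'_less \<open>w \<in> words A\<close>]
      unfolding x_def y_def by (auto simp: zero_le_of_rat_iff of_rat_less_eq)
    moreover have "x \<le> C * y"
      using bounded \<open>w \<in> words A\<close> unfolding x_def y_def by blast
    moreover have "real_of_rat (nu PA 0 v) = 1/2 * (x + (1 - x) * X) + 1/2 * ((1 - y) * X)"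
      unfolding x_def y_def X_def 2(1) nu_round[OF 2(2,3)]
      by (simp add: of_rat_add of_rat_mult of_rat_diff of_rat_divide)
    ultimately show ?thesis
      using round_bound C by presburger
  qed
qed

lemma nu_start_repeated_rounds:
  assumes w: "w \<in> words A"
  defines "x \<equiv> real_of_rat (nu A s w)" and "y \<equiv> real_of_rat (nu A s' w)"
  assumes pos: "0 < x + y"
  shows "real_of_rat (nu PA 0 (concat (replicate m (Suc k # w @ [k]))))
    = x / (x + y) * (1 - (1 - (x + y) / 2) ^ m)"
proof (induction m)
  case (Suc m)
  define v where "v = concat (replicate m (Suc k # w @ [k]))"
  define V where "V = real_of_rat (nu PA 0 v)"
  define L where "L = x / (x + y)"
  define \<rho> where "\<rho> = 1 - (x + y) / 2"
  have "v \<in> words PA"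
    using w unfolding v_def by (auto simp: words_def nletters_PA)
  then have "nu PA 0 (Suc k # w @ k # v)
      = 1/2 * (nu A s w + (1 - nu A s w) * nu PA 0 v) + 1/2 * ((1 - nu A s' w) * nu PA 0 v)"
    by (rule nu_round[OF w])
  then have "real_of_rat (nu PA 0 (concat (replicate (Suc m) (Suc k # w @ [k]))))
      = 1/2 * (x + (1 - x) * V) + 1/2 * ((1 - y) * V)"
    unfolding x_def y_def V_def v_def by (simp add: of_rat_add of_rat_mult of_rat_diff of_rat_divide)
  also have "\<dots> = x / 2 + \<rho> * V"
    unfolding \<rho>_def by (simp add: field_simps)
  also have "x / 2 = L * (1 - \<rho>)"
    using pos unfolding L_def \<rho>_def by simp
  also have "V = L * (1 - \<rho> ^ m)"
    using Suc unfolding V_def v_def L_def \<rho>_def .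
  also have "L * (1 - \<rho>) + \<rho> * (L * (1 - \<rho> ^ m)) = L * (1 - \<rho> ^ Suc m)"
    by (simp add: algebra_simps)
  finally show ?case
    unfolding L_def \<rho>_def .
qed simp

lemma value1_if_not_big_O:
  assumes "\<not> big_O A s s'"
  shows "value1 PA 0"
  unfolding value1_def
proof (intro allI impI)
  fix \<delta> :: real
  assume "0 < \<delta>"
  then have "0 < 2 / \<delta>"
    by simp
  then obtain w where w: "w \<in> words A"
    and gap: "\<not> real_of_rat (nu A s w) \<le> 2 / \<delta> * real_of_rat (nu A s' w)"
    using assms unfolding big_O_def by blast
  define x where "x = real_of_rat (nu A s w)"
  define y where "y = real_of_rat (nu A s' w)"
  have bounds: "0 \<le> x" "x \<le> 1" "0 \<le> y" "y \<le> 1"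
    using nu_LMC_bounds[OF LMC s_less w] nu_LMC_bounds[OF LMC s'_less w]
    unfolding x_def y_def by (auto simp: zero_le_of_rat_iff of_rat_less_eq)
  have "2 / \<delta> * y < x"
    using gap unfolding x_def y_def by simp
  then have "y < \<delta> * x / 2"
    using \<open>0 < \<delta>\<close> by (simp add: field_simps)
  from rounds_approach_one[OF bounds \<open>0 < \<delta>\<close> this] obtain m
    where "0 < x + y" "1 - \<delta> < x / (x + y) * (1 - (1 - (x + y) / 2) ^ m)"
    by blast
  then have "1 - \<delta> < real_of_rat (nu PA 0 (concat (replicate m (Suc k # w @ [k]))))"
    using nu_start_repeated_rounds[OF w] unfolding x_def y_def by simp
  moreover have "concat (replicate m (Suc k # w @ [k])) \<in> words PA"
    using w by (auto simp: words_def nletters_PA)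
  ultimately show "\<exists>v\<in>words PA. 1 - \<delta> < real_of_rat (nu PA 0 v)"
    by blast
qed

lemma big_O_iff_not_value1: "big_O A s s' \<longleftrightarrow> \<not> value1 PA 0"
proof
  assume "big_O A s s'"
  then obtain C :: real where C: "0 < C"
    and bounded: "\<forall>w\<in>words A. real_of_rat (nu A s w) \<le> C * real_of_rat (nu A s' w)"
    unfolding big_O_def by blast
  have "0 < 1 - C / (1 + C)"
    using C by (simp add: field_simps)
  show "\<not> value1 PA 0"
  proof
    assume "value1 PA 0"
    then obtain v where "v \<in> words PA" "1 - (1 - C / (1 + C)) < real_of_rat (nu PA 0 v)"
      using \<open>0 < 1 - C / (1 + C)\<close> unfolding value1_def by blast
    with nu_start_le_if_bounded[OF C bounded] show False
      by fastforce
  qed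
qed (use value1_if_not_big_O in blast)

end

section \<open>Computing the reduction on codes\<close>

lemma enc_rat_0: "enc_rat 0 = 1"
  by (simp add: enc_rat_def prod_encode_def int_encode_def sum_encode_def)

lemma enc_rat_1: "enc_rat 1 = 8"
  by (simp add: enc_rat_def prod_encode_def int_encode_def sum_encode_def numeral_eq_Suc)

lemma enc_rat_half: "enc_rat (1/2) = 12"
proof -
  have half: "(1/2 :: rat) = Fract 1 2"
    by (simp add: Fract_of_int_quotient)
  have "quotient_of (Fract 1 2) = (1, 2)"
    by (simp add: quotient_of_Fract normalize_def)
  then have "quotient_of (1/2 :: rat) = (1, 2)"
    unfolding half .
  then show ?thesis
    by (simp add: enc_rat_def prod_encode_def int_encode_def sum_encode_def numeral_eq_Suc)
qed

definition inst_automaton :: "nat \<Rightarrow> nat" where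
  "inst_automaton x = fst (prod_decode x)"

definition inst_s :: "nat \<Rightarrow> nat" where
  "inst_s x = fst (prod_decode (snd (prod_decode x)))"

definition inst_s' :: "nat \<Rightarrow> nat" where
  "inst_s' x = snd (prod_decode (snd (prod_decode x)))"

definition inst_states :: "nat \<Rightarrow> nat" where
  "inst_states x = fst (prod_decode (inst_automaton x))"

definition inst_matrices :: "nat \<Rightarrow> nat" where
  "inst_matrices x = fst (prod_decode (snd (prod_decode (inst_automaton x))))"

definition inst_finals :: "nat \<Rightarrow> nat" where
  "inst_finals x = snd (prod_decode (snd (prod_decode (inst_automaton x))))"

definition inst_letters :: "nat \<Rightarrow> nat" where
  "inst_letters x = length (list_decode (inst_matrices x))"

definition inst_weight :: "nat \<Rightarrow> nat \<Rightarrow> nat \<Rightarrow> nat \<Rightarrow> nat" where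
  "inst_weight x b q t = nth_default 0 (list_decode (nth_default 0 (list_decode
     (nth_default 0 (list_decode (inst_matrices x)) b)) q)) t"

text \<open>The numbers 1, 8 and 12 are \<open>enc_rat 0\<close>, \<open>enc_rat 1\<close> and \<open>enc_rat (1/2)\<close>.\<close>

definition reduction_weight_code :: "nat \<Rightarrow> nat \<Rightarrow> nat \<Rightarrow> nat \<Rightarrow> nat" where
  "reduction_weight_code x = reduction_weight (inst_states x) (inst_letters x)
     (\<lambda>q. q \<in> set (list_decode (inst_finals x))) (inst_s x) (inst_s' x) (inst_weight x) 1 8 12"

definition reduction_states_code :: "nat \<Rightarrow> nat" where
  "reduction_states_code x = 4 + 2 * inst_states x + inst_letters x * inst_states x"

definition reduction_code :: "nat \<Rightarrow> nat" where
  "reduction_code x = prod_encode (prod_encode (reduction_states_code x, prod_encode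
     (list_encode (map (\<lambda>a. list_encode (map (\<lambda>p. list_encode (map (\<lambda>t. reduction_weight_code x a p t)
        [0..<reduction_states_code x])) [0..<reduction_states_code x])) [0..<inst_letters x + 2]),
      list_encode [1])), 0)"

lemma rec_computable_reduction_weight_code:
  assumes "rec_computable k x" "rec_computable k a" "rec_computable k p" "rec_computable k t"
  shows "rec_computable k (\<lambda>xs. reduction_weight_code (x xs) (a xs) (p xs) (t xs))"
  unfolding reduction_weight_code_def reduction_weight_def inst_states_def inst_letters_def
    inst_matrices_def inst_finals_def inst_weight_def inst_s_def inst_s'_def inst_automaton_def
  by (intro rec_computable_If rec_decidable_conj rec_decidable_disj rec_decidable_not
      rec_decidable_eq rec_decidable_le rec_decidable_less rec_decidable_member
      rec_computable_add rec_computable_diff rec_computable_mult rec_computable_div rec_computable_mod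
      rec_computable_Suc rec_computable_const rec_computable_nth_default rec_computable_length
      rec_computable_fst_prod_decode rec_computable_snd_prod_decode assms)

lemma rec_computable_reduction_states_code:
  "rec_computable k x \<Longrightarrow> rec_computable k (\<lambda>xs. reduction_states_code (x xs))"
  unfolding reduction_states_code_def inst_states_def inst_letters_def inst_matrices_def inst_automaton_def
  by (intro rec_computable_add rec_computable_mult rec_computable_const rec_computable_length
      rec_computable_fst_prod_decode rec_computable_snd_prod_decode)

lemma computable_reduction_code: "computable reduction_code"
proof -
  have "rec_computable (Suc 3) (\<lambda>ys. reduction_weight_code (ys ! 3) (ys ! 2) (ys ! 1) (ys ! 0))"
    by (intro rec_computable_reduction_weight_code rec_computable_nth) simp_all
  from rec_computable_list_encode_map[OF this rec_computable_reduction_states_code[OF rec_computable_nth[of 2 3]]]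
  have "rec_computable (Suc 2) (\<lambda>ys. list_encode (map (\<lambda>t. reduction_weight_code (ys ! 2) (ys ! 1) (ys ! 0) t)
      [0..<reduction_states_code (ys ! 2)]))"
    by simp
  from rec_computable_list_encode_map[OF this rec_computable_reduction_states_code[OF rec_computable_nth[of 1 2]]]
  have "rec_computable (Suc 1) (\<lambda>ys. list_encode (map (\<lambda>p. list_encode (map (\<lambda>t. reduction_weight_code (ys ! 1) (ys ! 0) p t)
      [0..<reduction_states_code (ys ! 1)])) [0..<reduction_states_code (ys ! 1)]))"
    by (simp add: numeral_2_eq_2)
  moreover have "rec_computable 1 (\<lambda>ys. inst_letters (ys ! 0) + 2)"
    unfolding inst_letters_def inst_matrices_def inst_automaton_def
    by (intro rec_computable_add rec_computable_length rec_computable_fst_prod_decode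
        rec_computable_snd_prod_decode rec_computable_nth rec_computable_const) simp
  ultimately have "rec_computable 1 (\<lambda>ys. list_encode (map (\<lambda>a. list_encode (map (\<lambda>p. list_encode (map
      (\<lambda>t. reduction_weight_code (ys ! 0) a p t) [0..<reduction_states_code (ys ! 0)]))
      [0..<reduction_states_code (ys ! 0)])) [0..<inst_letters (ys ! 0) + 2]))"
    using rec_computable_list_encode_map by fastforce
  then have "rec_computable 1 (\<lambda>ys. reduction_code (ys ! 0))"
    unfolding reduction_code_def
    by (intro rec_computable_prod_encode rec_computable_reduction_states_code rec_computable_nth
        rec_computable_const) simp_all
  then have "rec_computable 1 (\<lambda>ys. reduction_code (hd ys))"
    by (rule rec_computable_cong) (auto simp: length_Suc_conv)
  then show ?thesis
    by (rule computable_if_rec_computable)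
qed

lemma inst_enc_bigO_inst:
  shows "inst_states (enc_bigO_inst A s s') = states A"
    and "inst_letters (enc_bigO_inst A s s') = nletters A"
    and "set (list_decode (inst_finals (enc_bigO_inst A s s'))) = finals A"
    and "inst_s (enc_bigO_inst A s s') = s"
    and "inst_s' (enc_bigO_inst A s s') = s'"
  by (simp_all add: enc_bigO_inst_def enc_wa_def inst_states_def inst_letters_def inst_finals_def
      inst_matrices_def inst_automaton_def inst_s_def inst_s'_def states_def nletters_def finals_def)

lemma inst_weight_enc_bigO_inst:
  assumes "well_formed A" "b < nletters A" "q < states A" "t < states A"
  shows "inst_weight (enc_bigO_inst A s s') b q t = enc_rat (wt A b q t)"
proof -
  obtain n Ms Fs where A: "A = (n, Ms, Fs)"
    by (cases A) auto
  have "length (Ms ! b) = n" "\<forall>r\<in>set (Ms ! b). length r = n"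
    using assms(1,2) unfolding well_formed_def by (auto simp: A states_def nletters_def)
  then show ?thesis
    using assms(2-4)
    by (simp add: inst_weight_def inst_matrices_def inst_automaton_def enc_bigO_inst_def enc_wa_def
        nth_default_nth A states_def nletters_def wt_def)
qed

context big_O_instance
begin

lemma reduction_weight_code_enc_bigO_inst:
  "reduction_weight_code (enc_bigO_inst A s s') = (\<lambda>a p t. enc_rat (weight a p t))"
proof (intro ext)
  fix a p t
  have "reduction_weight_code (enc_bigO_inst A s s') a p t
      = reduction_weight n k (\<lambda>q. q \<in> F) s s' (\<lambda>b q t. enc_rat (M b q t))
          (enc_rat 0) (enc_rat 1) (enc_rat (1/2)) a p t"
    unfolding reduction_weight_code_def inst_enc_bigO_inst enc_rat_0 enc_rat_1 enc_rat_half
    by (intro reduction_weight_cong inst_weight_enc_bigO_inst well_formed)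
  then show "reduction_weight_code (enc_bigO_inst A s s') a p t = enc_rat (weight a p t)"
    unfolding weight_def reduction_weight_map[of enc_rat] .
qed

lemma reduction_code_enc_bigO_inst: "reduction_code (enc_bigO_inst A s s') = enc_PA PA 0"
proof -
  have "reduction_states_code (enc_bigO_inst A s s') = N"
    by (simp add: reduction_states_code_def N_def inst_enc_bigO_inst)
  moreover have "list_encode [1] = 3" "prod_encode (1, 0) = 2"
    by (simp_all add: prod_encode_def numeral_eq_Suc)
  ultimately show ?thesis
    unfolding reduction_code_def enc_PA_def enc_wa_def inst_enc_bigO_inst reduction_weight_code_enc_bigO_inst
    by (simp add: PA_def o_def del: upt_Suc)
qed

end

theorem proposition5p3:
  shows "\<exists>f b. computable f \<and>
    (\<forall>A s s'. is_LMC A \<and> s < states A \<and> s' < states A \<longrightarrow>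
       (\<exists>P qs. is_PA P qs \<and> f (enc_bigO_inst A s s') = enc_PA P qs \<and>
               (big_O A s s' \<longleftrightarrow> (value1 P qs \<longleftrightarrow> b))))"
proof (intro exI[of _ reduction_code] exI[of _ False] conjI computable_reduction_code allI impI)
  fix A s s'
  assume "is_LMC A \<and> s < states A \<and> s' < states A"
  then interpret big_O_instance A s s'
    by unfold_locales auto
  show "\<exists>P qs. is_PA P qs \<and> reduction_code (enc_bigO_inst A s s') = enc_PA P qs
      \<and> (big_O A s s' \<longleftrightarrow> (value1 P qs \<longleftrightarrow> False))"
    using PA_is_PA reduction_code_enc_bigO_inst big_O_iff_not_value1 by blast
qed

end
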